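(* Assume the Collatz conjecture: for every positive integer $n$ there is $j\ge 0$ with $T_0^{(j)}(n)=1$. Then for every integer $k\ge 0$ and every positive integer $n$, the $T_k$-trajectory $n, T_k(n), T_k^{(2)}(n),\dots$ eventually enters the cycle $3^k\to 2\cdot 3^k\to 3^k$.
   Context: For an integer $k\ge 0$, define $T_k$ on the positive integers by $T_k(n)=(3n+3^k)/2$ if $n$ is odd and $T_k(n)=n/2$ if $n$ is even. In particular $T_0(n)=(3n+1)/2$ for odd $n$ and $n/2$ for even $n$. For any map $T$, $T^{(j)}$ denotes its $j$-fold iterate, with $T^{(0)}$ the identity. *)

theory Defs
  imports Main
begin

text \<open>The generalized Collatz map T_k on positive integers (modelled on nat):
  T_k(n) = (3n + 3^k)/2 for odd n, n/2 for even n.  For odd n, 3n + 3^k is even,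
  so the division is exact.\<close>
definition T :: "nat \<Rightarrow> nat \<Rightarrow> nat" where
  "T k n = (if odd n then (3 * n + 3 ^ k) div 2 else n div 2)"

end

theory Submission
  imports Defs
begin

text \<open>As long as 3^a divides n with a < k, an even step of T_k keeps the factor 3^a and
  strictly decreases n, while an odd step produces a multiple of 3^(a+1). Hence every trajectory
  of T_k reaches a positive multiple 3^k m of 3^k. On such multiples T_k acts as T_0 scaled by
  3^k, so the Collatz conjecture for m carries the trajectory to 3^k.\<close>

lemma odd_dvd_div_2:
  fixes c x :: nat
  assumes "odd c" "c dvd x" "even x"
  shows "c dvd x div 2"
proof -
  have "c dvd 2 * (x div 2)" using assms(2,3) by simp
  moreover have "coprime c 2" using assms(1) by simp
  ultimately show ?thesis by (simp add: coprime_dvd_mult_right_iff)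
qed

lemma T_pos: "0 < n \<Longrightarrow> 0 < T k n"
  by (auto simp: T_def elim: oddE)

lemma T_scale: "T (a + b) (3 ^ a * m) = 3 ^ a * T b m"
proof (cases "even m")
  case True
  then show ?thesis by (simp add: T_def div_mult_swap)
next
  case False
  have "3 * (3 ^ a * m) + 3 ^ (a + b) = 3 ^ a * (3 * m + 3 ^ b)"
    by (simp add: power_add algebra_simps)
  then show ?thesis using False by (simp add: T_def div_mult_swap)
qed

lemma funpow_T_scale: "(T (a + b) ^^ j) (3 ^ a * m) = 3 ^ a * (T b ^^ j) m"
  by (induction j) (simp_all add: T_scale)

lemma T_even_dvd: "(3::nat) ^ a dvd n \<Longrightarrow> even n \<Longrightarrow> 3 ^ a dvd T k n"
  by (simp add: T_def odd_dvd_div_2)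

lemma T_odd_dvd_Suc:
  assumes "(3::nat) ^ a dvd n" "a < k" "odd n"
  shows "3 ^ Suc a dvd T k n"
proof -
  have "3 ^ Suc a dvd 3 * n" using assms(1) by simp
  moreover have "(3::nat) ^ Suc a dvd 3 ^ k" using assms(2) by (metis Suc_leI le_imp_power_dvd)
  ultimately have "3 ^ Suc a dvd 3 * n + 3 ^ k" by simp
  then show ?thesis using assms(3) by (simp add: T_def odd_dvd_div_2)
qed

lemma funpow_T_reaches_dvd_Suc:
  assumes "0 < n" "(3::nat) ^ a dvd n" "a < k"
  shows "\<exists>j. 0 < (T k ^^ j) n \<and> 3 ^ Suc a dvd (T k ^^ j) n"
  using assms(1,2)
proof (induction n rule: less_induct)
  case (less n)
  show ?case
  proof (cases "even n")
    case True
    have "T k n < n" "0 < T k n" using less.prems(1) True by (auto simp: T_def)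
    moreover have "3 ^ a dvd T k n" using less.prems(2) True by (rule T_even_dvd)
    ultimately obtain j where "0 < (T k ^^ j) (T k n) \<and> 3 ^ Suc a dvd (T k ^^ j) (T k n)"
      using less.IH by blast
    then show ?thesis by (metis comp_apply funpow_Suc_right)
  next
    case False
    then have "0 < (T k ^^ 1) n \<and> 3 ^ Suc a dvd (T k ^^ 1) n"
      using less.prems assms(3) T_pos T_odd_dvd_Suc by simp
    then show ?thesis by blast
  qed
qed

lemma funpow_T_reaches_dvd:
  assumes "0 < n" "b \<le> k"
  shows "\<exists>j. 0 < (T k ^^ j) n \<and> (3::nat) ^ b dvd (T k ^^ j) n"
  using assms(2)
proof (induction b)
  case 0
  show ?case using assms(1) by (intro exI[of _ 0]) simp
next
  case (Suc b)
  then obtain j where "0 < (T k ^^ j) n" "3 ^ b dvd (T k ^^ j) n" by auto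
  then obtain i where "0 < (T k ^^ i) ((T k ^^ j) n) \<and> 3 ^ Suc b dvd (T k ^^ i) ((T k ^^ j) n)"
    using funpow_T_reaches_dvd_Suc Suc.prems by (meson Suc_le_lessD)
  then show ?case by (metis funpow_add comp_apply)
qed

theorem corollary1:
  assumes collatz: "\<forall>n::nat. n > 0 \<longrightarrow> (\<exists>j. (T 0 ^^ j) n = 1)"
  shows "\<forall>(k::nat) (n::nat). n > 0 \<longrightarrow>
           (\<exists>j. (T k ^^ j) n = 3 ^ k \<or> (T k ^^ j) n = 2 * 3 ^ k)"
proof (intro allI impI)
  fix k n :: nat
  assume "n > 0"
  then obtain j where "0 < (T k ^^ j) n" "3 ^ k dvd (T k ^^ j) n"
    using funpow_T_reaches_dvd by blast
  then obtain m where m: "(T k ^^ j) n = 3 ^ k * m" and "0 < m"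
    by (metis dvdE gr0I mult_0_right)
  then obtain i where i: "(T 0 ^^ i) m = 1" using collatz by blast
  have "(T k ^^ (i + j)) n = (T (k + 0) ^^ i) (3 ^ k * m)"
    by (simp add: funpow_add m)
  also have "\<dots> = 3 ^ k" by (simp only: funpow_T_scale i mult_1_right)
  finally have "(T k ^^ (i + j)) n = 3 ^ k" .
  then show "\<exists>j. (T k ^^ j) n = 3 ^ k \<or> (T k ^^ j) n = 2 * 3 ^ k" by blast
qed

end
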